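(* Let $G(z)=\sum_{n\ge0}a_n^2z^n$ with $a_n\ge0$ (infinitely many non-zero) have radius of convergence $R_G$, and put $t_G=\log R_G$, $H(z)=G(e^z)$, $B(t)=(\log H)''(t)$. Then for all $t<t_G$ and $\theta\in[-\pi,\pi]$ for which the denominator below is non-zero, \[ \frac{|H(t)H'(t+i\theta)-H(t+i\theta)H'(t)|^2}{H^2(t)\left(H^2(t)-|H(t+i\theta)|^2\right)}\le B(t). \] *)

theory Defs
  imports "HOL-Analysis.Analysis"
begin

definition G_fun :: "(nat \<Rightarrow> real) \<Rightarrow> complex \<Rightarrow> complex" where
  "G_fun a z = (\<Sum>n. complex_of_real ((a n)\<^sup>2) * z ^ n)"

definition R_G :: "(nat \<Rightarrow> real) \<Rightarrow> ereal" where
  "R_G a = conv_radius (\<lambda>n. (a n)\<^sup>2)"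

definition H_fun :: "(nat \<Rightarrow> real) \<Rightarrow> complex \<Rightarrow> complex" where
  "H_fun a z = G_fun a (exp z)"

text \<open>B(t) = (log H)''(t) for real t, where H is real and positive on the reals.\<close>
definition B_fun :: "(nat \<Rightarrow> real) \<Rightarrow> real \<Rightarrow> real" where
  "B_fun a t = deriv (deriv (\<lambda>s. ln (Re (H_fun a (complex_of_real s))))) t"

end

theory Submission
  imports Defs
begin

(*
  Put w_n = a_n^2 e^(nt). Then H(t), H'(t) and H''(t) are the moments of order 0, 1, 2 of n
  under the weights w_n, so B(t) = (log H)''(t) is the variance of n for the probability
  weights w_n / H(t). Likewise H(t + i theta) and H'(t + i theta) are the moments of order 0
  and 1 of the unimodular variable y_n = e^(i n theta). Since |y_n| = 1, the quantity
  H(t)^2 - |H(t + i theta)|^2 equals H(t)^2 times the variance of y, and the numerator is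
  H(t)^4 |Cov(n, y)|^2. The inequality is therefore |Cov(n, y)|^2 <= Var(n) Var(y), i.e.
  Cauchy-Schwarz for centred variables, proved for partial sums and passed to the limit.
*)

lemma sum_weighted_centered_product:
  fixes w p q :: "'i \<Rightarrow> 'a::comm_ring" and A :: "'i set"
  defines "W \<equiv> \<Sum>i\<in>A. w i" and "P \<equiv> \<Sum>i\<in>A. w i * p i" and "Q \<equiv> \<Sum>i\<in>A. w i * q i"
  shows "(\<Sum>i\<in>A. w i * ((W * p i - P) * (W * q i - Q))) = W * (W * (\<Sum>i\<in>A. w i * p i * q i) - P * Q)"
proof -
  have "(\<Sum>i\<in>A. w i * ((W * p i - P) * (W * q i - Q)))
      = (\<Sum>i\<in>A. W * W * (w i * p i * q i) - W * Q * (w i * p i) - P * W * (w i * q i) + P * Q * w i)"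
    by (rule sum.cong) (simp_all add: algebra_simps)
  also have "\<dots> = W * W * (\<Sum>i\<in>A. w i * p i * q i) - W * Q * P - P * W * Q + P * Q * W"
    by (simp add: W_def P_def Q_def sum.distrib sum_subtractf sum_distrib_left)
  also have "\<dots> = W * (W * (\<Sum>i\<in>A. w i * p i * q i) - P * Q)"
    by (simp add: algebra_simps)
  finally show ?thesis .
qed

lemma weighted_Cauchy_Schwarz:
  fixes w x :: "'i \<Rightarrow> real" and y :: "'i \<Rightarrow> complex"
    and A :: "'i set"
  assumes "\<And>i. i \<in> A \<Longrightarrow> w i \<ge> 0"
  shows "(cmod (\<Sum>i\<in>A. of_real (w i * x i) * y i))\<^sup>2
           \<le> (\<Sum>i\<in>A. w i * (x i)\<^sup>2) * (\<Sum>i\<in>A. w i * (cmod (y i))\<^sup>2)"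
proof -
  have "cmod (\<Sum>i\<in>A. of_real (w i * x i) * y i) \<le> (\<Sum>i\<in>A. cmod (of_real (w i * x i) * y i))"
    by (rule norm_sum)
  also have "\<dots> = (\<Sum>i\<in>A. (sqrt (w i) * \<bar>x i\<bar>) * (sqrt (w i) * cmod (y i)))"
    using assms by (intro sum.cong refl) (simp add: norm_mult abs_mult real_sqrt_mult[symmetric])
  finally have "(cmod (\<Sum>i\<in>A. of_real (w i * x i) * y i))\<^sup>2
      \<le> (\<Sum>i\<in>A. (sqrt (w i) * \<bar>x i\<bar>) * (sqrt (w i) * cmod (y i)))\<^sup>2"
    by (rule power_mono) simp
  also have "\<dots> \<le> (\<Sum>i\<in>A. (sqrt (w i) * \<bar>x i\<bar>)\<^sup>2) * (\<Sum>i\<in>A. (sqrt (w i) * cmod (y i))\<^sup>2)"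
    by (rule Cauchy_Schwarz_ineq_sum)
  also have "\<dots> = (\<Sum>i\<in>A. w i * (x i)\<^sup>2) * (\<Sum>i\<in>A. w i * (cmod (y i))\<^sup>2)"
    using assms by (simp add: power_mult_distrib)
  finally show ?thesis .
qed

(* For the probability weights w / S0 this is |Cov(x, y)|^2 <= Var x * Var y with denominators
   cleared; the extra factor S0^2 spares the proof a division by S0. *)
lemma weighted_covariance_bound:
  fixes w x :: "'i \<Rightarrow> real" and y :: "'i \<Rightarrow> complex"
    and A :: "'i set"
  assumes "\<And>i. i \<in> A \<Longrightarrow> w i \<ge> 0"
  defines "S0 \<equiv> \<Sum>i\<in>A. w i" and "Sx \<equiv> \<Sum>i\<in>A. w i * x i"
    and "Sxx \<equiv> \<Sum>i\<in>A. w i * (x i)\<^sup>2" and "Sy \<equiv> \<Sum>i\<in>A. of_real (w i) * y i"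
    and "Sxy \<equiv> \<Sum>i\<in>A. of_real (w i * x i) * y i" and "Syy \<equiv> \<Sum>i\<in>A. w i * (cmod (y i))\<^sup>2"
  shows "S0\<^sup>2 * (cmod (of_real S0 * Sxy - Sy * of_real Sx))\<^sup>2
           \<le> S0\<^sup>2 * ((S0 * Sxx - Sx\<^sup>2) * (S0 * Syy - (cmod Sy)\<^sup>2))"
proof -
  define u where "u i = S0 * x i - Sx" for i
  define v where "v i = of_real S0 * y i - Sy" for i
  have cov: "(\<Sum>i\<in>A. of_real (w i * u i) * v i) = of_real S0 * (of_real S0 * Sxy - Sy * of_real Sx)"
    using sum_weighted_centered_product[of "\<lambda>i. of_real (w i)" A "\<lambda>i. of_real (x i)" y]
    by (simp add: u_def v_def S0_def Sx_def Sy_def Sxy_def algebra_simps)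
  have var_x: "(\<Sum>i\<in>A. w i * (u i)\<^sup>2) = S0 * (S0 * Sxx - Sx\<^sup>2)"
    using sum_weighted_centered_product[of w A x x]
    by (simp add: u_def S0_def Sx_def Sxx_def power2_eq_square algebra_simps)
  have "of_real (\<Sum>i\<in>A. w i * (cmod (v i))\<^sup>2) = (\<Sum>i\<in>A. of_real (w i) * (v i * cnj (v i)))"
    by (simp only: of_real_sum of_real_mult complex_norm_square)
  also have "\<dots> = of_real S0 * (of_real S0 * of_real Syy - Sy * cnj Sy)"
  proof -
    have "(\<Sum>i\<in>A. complex_of_real (w i)) = of_real S0"
      and "(\<Sum>i\<in>A. of_real (w i) * cnj (y i)) = cnj Sy"
      by (simp_all add: S0_def Sy_def cnj_sum)
    moreover have "(\<Sum>i\<in>A. of_real (w i) * y i * cnj (y i)) = of_real Syy"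
      unfolding Syy_def of_real_sum of_real_mult complex_norm_square by (simp add: mult.assoc)
    ultimately show ?thesis
      using sum_weighted_centered_product[of "\<lambda>i. of_real (w i)" A y "\<lambda>i. cnj (y i)"]
      by (simp add: v_def Sy_def[symmetric] mult.assoc)
  qed
  also have "\<dots> = of_real (S0 * (S0 * Syy - (cmod Sy)\<^sup>2))"
    by (simp only: of_real_mult of_real_diff complex_norm_square)
  finally have var_y: "(\<Sum>i\<in>A. w i * (cmod (v i))\<^sup>2) = S0 * (S0 * Syy - (cmod Sy)\<^sup>2)"
    using of_real_eq_iff by blast
  have "(cmod (of_real S0 * (of_real S0 * Sxy - Sy * of_real Sx)))\<^sup>2
          \<le> S0 * (S0 * Sxx - Sx\<^sup>2) * (S0 * (S0 * Syy - (cmod Sy)\<^sup>2))"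
    using weighted_Cauchy_Schwarz[of A w u v] assms(1) unfolding cov var_x var_y by simp
  then show ?thesis
    by (simp add: norm_mult power_mult_distrib power2_eq_square mult_ac)
qed

lemma weighted_covariance_bound_sums:
  fixes w x :: "nat \<Rightarrow> real" and y :: "nat \<Rightarrow> complex"
  assumes "\<And>n. w n \<ge> 0" and "S0 > 0"
    and "w sums S0" and "(\<lambda>n. w n * x n) sums Sx" and "(\<lambda>n. w n * (x n)\<^sup>2) sums Sxx"
    and "(\<lambda>n. of_real (w n) * y n) sums Sy" and "(\<lambda>n. of_real (w n * x n) * y n) sums Sxy"
    and "(\<lambda>n. w n * (cmod (y n))\<^sup>2) sums Syy"
  shows "(cmod (of_real S0 * Sxy - Sy * of_real Sx))\<^sup>2 \<le> (S0 * Sxx - Sx\<^sup>2) * (S0 * Syy - (cmod Sy)\<^sup>2)"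
proof -
  define s0 where "s0 N = (\<Sum>n<N. w n)" for N
  define sx where "sx N = (\<Sum>n<N. w n * x n)" for N
  define sxx where "sxx N = (\<Sum>n<N. w n * (x n)\<^sup>2)" for N
  define sy where "sy N = (\<Sum>n<N. of_real (w n) * y n)" for N
  define sxy where "sxy N = (\<Sum>n<N. of_real (w n * x n) * y n)" for N
  define syy where "syy N = (\<Sum>n<N. w n * (cmod (y n))\<^sup>2)" for N
  have lim: "s0 \<longlonglongrightarrow> S0" "sx \<longlonglongrightarrow> Sx" "sxx \<longlonglongrightarrow> Sxx"
    "sy \<longlonglongrightarrow> Sy" "sxy \<longlonglongrightarrow> Sxy" "syy \<longlonglongrightarrow> Syy"
    using assms(3-8)
    unfolding sums_def s0_def[abs_def] sx_def[abs_def] sxx_def[abs_def] sy_def[abs_def]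
      sxy_def[abs_def] syy_def[abs_def]
    by blast+
  have "S0\<^sup>2 * (cmod (of_real S0 * Sxy - Sy * of_real Sx))\<^sup>2
          \<le> S0\<^sup>2 * ((S0 * Sxx - Sx\<^sup>2) * (S0 * Syy - (cmod Sy)\<^sup>2))"
  proof (rule LIMSEQ_le)
    show "(\<lambda>N. (s0 N)\<^sup>2 * (cmod (of_real (s0 N) * sxy N - sy N * of_real (sx N)))\<^sup>2)
        \<longlonglongrightarrow> S0\<^sup>2 * (cmod (of_real S0 * Sxy - Sy * of_real Sx))\<^sup>2"
      by (intro tendsto_intros lim)
    show "(\<lambda>N. (s0 N)\<^sup>2 * ((s0 N * sxx N - (sx N)\<^sup>2) * (s0 N * syy N - (cmod (sy N))\<^sup>2)))
        \<longlonglongrightarrow> S0\<^sup>2 * ((S0 * Sxx - Sx\<^sup>2) * (S0 * Syy - (cmod Sy)\<^sup>2))"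
      by (intro tendsto_intros lim)
    show "\<exists>N0. \<forall>N\<ge>N0. (s0 N)\<^sup>2 * (cmod (of_real (s0 N) * sxy N - sy N * of_real (sx N)))\<^sup>2
        \<le> (s0 N)\<^sup>2 * ((s0 N * sxx N - (sx N)\<^sup>2) * (s0 N * syy N - (cmod (sy N))\<^sup>2))"
      unfolding s0_def sx_def sxx_def sy_def sxy_def syy_def
      by (intro exI[of _ 0] allI impI weighted_covariance_bound assms(1))
  qed
  then show ?thesis
    using \<open>S0 > 0\<close> by simp
qed

lemma conv_radius_le_conv_radius_diffs:
  fixes f :: "nat \<Rightarrow> 'a::{banach,real_normed_field}"
  shows "conv_radius f \<le> conv_radius (diffs f)"
  using fps_conv_radius_deriv[of "Abs_fps f"]
  by (simp add: fps_conv_radius_def fps_deriv_def diffs_def)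

lemma conv_radius_le_conv_radius_of_nat_power_mult:
  fixes f :: "nat \<Rightarrow> 'a::{banach,real_normed_field}"
  shows "conv_radius f \<le> conv_radius (\<lambda>n. of_nat n ^ k * f n)"
proof (induction k)
  case (Suc k)
  let ?g = "\<lambda>n. of_nat n ^ k * f n"
  have "conv_radius ?g \<le> conv_radius (\<lambda>n. of_nat n * ?g n)"
    using conv_radius_le_conv_radius_diffs[of ?g] conv_radius_shift[of "\<lambda>n. of_nat n * ?g n" 1]
    by (simp add: diffs_def)
  with Suc show ?case
    by (simp add: mult.assoc)
qed simp

lemma has_field_derivative_powser_exp:
  fixes f :: "nat \<Rightarrow> 'a::{banach,real_normed_field}"
  assumes "ereal (norm (exp z)) < conv_radius f"
  shows "((\<lambda>z. \<Sum>n. f n * exp z ^ n) has_field_derivative (\<Sum>n. of_nat n * f n * exp z ^ n)) (at z)"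
proof -
  have "summable (\<lambda>n. diffs f n * exp z ^ n)"
    using assms conv_radius_le_conv_radius_diffs[of f] by (intro summable_in_conv_radius) auto
  then have "(\<lambda>n. diffs f n * exp z ^ n * exp z) sums ((\<Sum>n. diffs f n * exp z ^ n) * exp z)"
    by (intro sums_mult2 summable_sums)
  then have "(\<lambda>n. of_nat (Suc n) * f (Suc n) * exp z ^ Suc n)
      sums ((\<Sum>n. diffs f n * exp z ^ n) * exp z)"
    by (simp add: diffs_def algebra_simps)
  then have "(\<lambda>n. of_nat n * f n * exp z ^ n) sums ((\<Sum>n. diffs f n * exp z ^ n) * exp z)"
    by (subst (asm) sums_Suc_iff) simp
  moreover have "((\<lambda>z. \<Sum>n. f n * exp z ^ n) has_field_derivative
      (\<Sum>n. diffs f n * exp z ^ n) * exp z) (at z)"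
    using DERIV_chain2[OF has_field_derivative_powser[OF assms] DERIV_exp] .
  ultimately show ?thesis
    by (simp add: sums_iff)
qed

definition exp_moment :: "(nat \<Rightarrow> real) \<Rightarrow> nat \<Rightarrow> real \<Rightarrow> real" where
  "exp_moment c k s = (\<Sum>n. real n ^ k * c n * exp s ^ n)"

lemma exp_moment_sums:
  assumes "ereal (exp s) < conv_radius c"
  shows "(\<lambda>n. real n ^ k * c n * exp s ^ n) sums exp_moment c k s"
  unfolding exp_moment_def
  using assms conv_radius_le_conv_radius_of_nat_power_mult[of c k]
  by (intro summable_sums summable_in_conv_radius) auto

lemma has_real_derivative_exp_moment:
  assumes "ereal (exp s) < conv_radius c"
  shows "(exp_moment c k has_real_derivative exp_moment c (Suc k) s) (at s)"
proof -
  have "((\<lambda>s. \<Sum>n. real n ^ k * c n * exp s ^ n) has_real_derivative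
      (\<Sum>n. real n * (real n ^ k * c n) * exp s ^ n)) (at s)"
    using assms conv_radius_le_conv_radius_of_nat_power_mult[of c k]
    by (intro has_field_derivative_powser_exp) auto
  then show ?thesis
    by (simp add: exp_moment_def[abs_def] mult.assoc)
qed

lemma exp_moment_pos:
  assumes "\<And>n. c n \<ge> 0" and "c m \<noteq> 0" and "ereal (exp s) < conv_radius c"
  shows "exp_moment c 0 s > 0"
proof -
  have "c m > 0"
    using assms(1)[of m] assms(2) by simp
  then show ?thesis
    unfolding exp_moment_def
    using sums_summable[OF exp_moment_sums[OF assms(3), of 0]] assms(1)
    by (intro suminf_pos2[of _ m]) simp_all
qed

lemma eventually_exp_less:
  assumes "ereal (exp t) < R"
  shows "eventually (\<lambda>s. ereal (exp s) < R) (nhds t)"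
proof -
  have "((\<lambda>s. ereal (exp s)) \<longlongrightarrow> ereal (exp t)) (nhds t)"
    by (intro tendsto_ereal tendsto_exp filterlim_ident)
  from order_tendstoD(2)[OF this assms] show ?thesis .
qed

lemma deriv2_ln_exp_moment:
  assumes "\<And>n. c n \<ge> 0" and "c m \<noteq> 0" and "ereal (exp t) < conv_radius c"
  shows "deriv (deriv (\<lambda>s. ln (exp_moment c 0 s))) t
           = (exp_moment c 2 t * exp_moment c 0 t - (exp_moment c 1 t)\<^sup>2) / (exp_moment c 0 t)\<^sup>2"
proof -
  have "deriv (\<lambda>s. ln (exp_moment c 0 s)) s = exp_moment c 1 s / exp_moment c 0 s"
    if "ereal (exp s) < conv_radius c" for s
    using DERIV_chain2[OF DERIV_ln_divide[OF exp_moment_pos[OF assms(1,2) that]]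
        has_real_derivative_exp_moment[OF that]]
    by (intro DERIV_imp_deriv) simp
  then have "eventually (\<lambda>s. deriv (\<lambda>s. ln (exp_moment c 0 s)) s
               = exp_moment c 1 s / exp_moment c 0 s) (nhds t)"
    using eventually_exp_less[OF assms(3)] by (rule eventually_mono[rotated])
  moreover have "((\<lambda>s. exp_moment c 1 s / exp_moment c 0 s) has_real_derivative
      (exp_moment c 2 t * exp_moment c 0 t - exp_moment c 1 t * exp_moment c 1 t)
        / (exp_moment c 0 t * exp_moment c 0 t)) (at t)"
    using exp_moment_pos[OF assms] has_real_derivative_exp_moment[OF assms(3)]
    by (intro DERIV_divide) (simp_all add: numeral_2_eq_2)
  ultimately show ?thesis
    by (simp add: deriv_cong_ev DERIV_imp_deriv power2_eq_square)
qed

lemma conv_radius_of_real: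
  fixes f :: "nat \<Rightarrow> real"
  shows "conv_radius (\<lambda>n. of_real (f n) :: 'a::{banach,real_normed_div_algebra}) = conv_radius f"
proof -
  have "conv_radius (\<lambda>n. of_real (f n) :: 'a) = conv_radius (\<lambda>n. norm (of_real (f n) :: 'a))"
    by (rule conv_radius_norm[symmetric])
  then show ?thesis
    using conv_radius_norm[of f] by simp
qed

lemma conv_radius_complex_coeffs_eq_R_G: "conv_radius (\<lambda>n. complex_of_real ((a n)\<^sup>2)) = R_G a"
  by (simp only: R_G_def conv_radius_of_real)

lemma H_fun_sums:
  assumes "ereal (norm (exp z)) < R_G a"
  shows "(\<lambda>n. of_real ((a n)\<^sup>2) * exp z ^ n) sums H_fun a z"
  unfolding H_fun_def G_fun_def
  using assms
  by (intro summable_sums summable_in_conv_radius) (simp only: conv_radius_complex_coeffs_eq_R_G)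

lemma deriv_H_fun_sums:
  assumes "ereal (norm (exp z)) < R_G a"
  shows "(\<lambda>n. of_nat n * of_real ((a n)\<^sup>2) * exp z ^ n) sums deriv (H_fun a) z"
proof -
  have R: "ereal (norm (exp z)) < conv_radius (\<lambda>n. complex_of_real ((a n)\<^sup>2))"
    using assms by (simp only: conv_radius_complex_coeffs_eq_R_G)
  have "deriv (H_fun a) z = (\<Sum>n. of_nat n * of_real ((a n)\<^sup>2) * exp z ^ n)"
    unfolding H_fun_def[abs_def] G_fun_def
    by (rule DERIV_imp_deriv[OF has_field_derivative_powser_exp[OF R]])
  moreover have "summable (\<lambda>n. of_nat n * of_real ((a n)\<^sup>2) * exp z ^ n)"
    using R conv_radius_le_conv_radius_of_nat_power_mult[of "\<lambda>n. complex_of_real ((a n)\<^sup>2)" 1]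
    by (intro summable_in_conv_radius) auto
  ultimately show ?thesis
    by (simp add: summable_sums)
qed

lemma H_fun_of_real:
  assumes "ereal (exp s) < R_G a"
  shows "H_fun a (of_real s) = of_real (exp_moment (\<lambda>n. (a n)\<^sup>2) 0 s)"
proof -
  have "(\<lambda>n. complex_of_real ((a n)\<^sup>2 * exp s ^ n)) sums of_real (exp_moment (\<lambda>n. (a n)\<^sup>2) 0 s)"
    using sums_of_real[OF exp_moment_sums[of s "\<lambda>n. (a n)\<^sup>2" 0]] assms
    unfolding R_G_def by simp
  moreover have "(\<lambda>n. complex_of_real ((a n)\<^sup>2 * exp s ^ n)) sums H_fun a (of_real s)"
    using H_fun_sums[of "of_real s" a] assms by (simp add: exp_of_real)
  ultimately show ?thesis
    using sums_unique2 by blast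
qed

lemma deriv_H_fun_of_real:
  assumes "ereal (exp s) < R_G a"
  shows "deriv (H_fun a) (of_real s) = of_real (exp_moment (\<lambda>n. (a n)\<^sup>2) 1 s)"
proof -
  have "(\<lambda>n. complex_of_real (real n * (a n)\<^sup>2 * exp s ^ n)) sums of_real (exp_moment (\<lambda>n. (a n)\<^sup>2) 1 s)"
    using sums_of_real[OF exp_moment_sums[of s "\<lambda>n. (a n)\<^sup>2" 1]] assms
    unfolding R_G_def by simp
  moreover have "(\<lambda>n. complex_of_real (real n * (a n)\<^sup>2 * exp s ^ n)) sums deriv (H_fun a) (of_real s)"
    using deriv_H_fun_sums[of "of_real s" a] assms by (simp add: exp_of_real)
  ultimately show ?thesis
    using sums_unique2 by blast
qed

lemma B_fun_eq_exp_moments: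
  assumes "a m \<noteq> 0" and "ereal (exp t) < R_G a"
  defines "M \<equiv> exp_moment (\<lambda>n. (a n)\<^sup>2)"
  shows "B_fun a t = (M 2 t * M 0 t - (M 1 t)\<^sup>2) / (M 0 t)\<^sup>2"
proof -
  have "eventually (\<lambda>s. ln (Re (H_fun a (of_real s))) = ln (M 0 s)) (nhds t)"
    using eventually_exp_less[OF assms(2)] by eventually_elim (simp add: H_fun_of_real M_def)
  then have "eventually (\<lambda>s. eventually (\<lambda>s. ln (Re (H_fun a (of_real s))) = ln (M 0 s)) (nhds s))
      (nhds t)"
    by (simp only: eventually_eventually)
  then have "eventually (\<lambda>s. deriv (\<lambda>s. ln (Re (H_fun a (of_real s)))) s = deriv (\<lambda>s. ln (M 0 s)) s)
      (nhds t)"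
    by eventually_elim (rule deriv_cong_ev, simp_all)
  then have "B_fun a t = deriv (deriv (\<lambda>s. ln (M 0 s))) t"
    unfolding B_fun_def by (rule deriv_cong_ev) simp
  also have "\<dots> = (M 2 t * M 0 t - (M 1 t)\<^sup>2) / (M 0 t)\<^sup>2"
    using assms(1,2) unfolding M_def R_G_def by (intro deriv2_ln_exp_moment) auto
  finally show ?thesis .
qed

lemma H_fun_Complex_sums:
  assumes "ereal (exp t) < R_G a"
  shows "(\<lambda>n. of_real ((a n)\<^sup>2 * exp t ^ n) * cis \<theta> ^ n) sums H_fun a (Complex t \<theta>)"
    and "(\<lambda>n. of_real ((a n)\<^sup>2 * exp t ^ n * real n) * cis \<theta> ^ n) sums deriv (H_fun a) (Complex t \<theta>)"
proof -
  have exp: "exp (Complex t \<theta>) = of_real (exp t) * cis \<theta>"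
    by (simp add: exp_eq_polar)
  then have R: "ereal (norm (exp (Complex t \<theta>))) < R_G a"
    using assms by (simp add: norm_mult)
  show "(\<lambda>n. of_real ((a n)\<^sup>2 * exp t ^ n) * cis \<theta> ^ n) sums H_fun a (Complex t \<theta>)"
    using H_fun_sums[OF R] by (simp add: exp power_mult_distrib mult.assoc)
  show "(\<lambda>n. of_real ((a n)\<^sup>2 * exp t ^ n * real n) * cis \<theta> ^ n) sums deriv (H_fun a) (Complex t \<theta>)"
    using deriv_H_fun_sums[OF R] by (simp add: exp power_mult_distrib mult_ac)
qed


lemma norm_H_fun_Complex_le:
  assumes "ereal (exp t) < R_G a"
  shows "cmod (H_fun a (Complex t \<theta>)) \<le> exp_moment (\<lambda>n. (a n)\<^sup>2) 0 t"
proof -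
  define w where "w n = (a n)\<^sup>2 * exp t ^ n" for n
  have sums_w: "w sums exp_moment (\<lambda>n. (a n)\<^sup>2) 0 t"
    using exp_moment_sums[of t "\<lambda>n. (a n)\<^sup>2" 0] assms unfolding w_def R_G_def by simp
  have norm_terms: "(\<lambda>n. norm (of_real (w n) * cis \<theta> ^ n)) = w"
    by (simp add: fun_eq_iff norm_mult norm_power w_def)
  have "cmod (H_fun a (Complex t \<theta>)) = norm (\<Sum>n. of_real (w n) * cis \<theta> ^ n)"
    by (simp only: sums_unique[OF H_fun_Complex_sums(1)[OF assms, folded w_def]])
  also have "\<dots> \<le> suminf w"
    using summable_norm[of "\<lambda>n. of_real (w n) * cis \<theta> ^ n"] sums_summable[OF sums_w]
    unfolding norm_terms by blast
  also have "\<dots> = exp_moment (\<lambda>n. (a n)\<^sup>2) 0 t"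
    by (rule sums_unique[OF sums_w, symmetric])
  finally show ?thesis .
qed

lemma H_fun_covariance_bound:
  fixes \<theta> :: real
  assumes "a m \<noteq> 0" and "ereal (exp t) < R_G a"
  defines "M \<equiv> exp_moment (\<lambda>n. (a n)\<^sup>2)"
    and "Hz \<equiv> H_fun a (Complex t \<theta>)" and "Hz' \<equiv> deriv (H_fun a) (Complex t \<theta>)"
  shows "(cmod (of_real (M 0 t) * Hz' - Hz * of_real (M 1 t)))\<^sup>2
           \<le> (M 0 t * M 2 t - (M 1 t)\<^sup>2) * (M 0 t * M 0 t - (cmod Hz)\<^sup>2)"
proof -
  define w where "w n = (a n)\<^sup>2 * exp t ^ n" for n
  have R: "ereal (exp t) < conv_radius (\<lambda>n. (a n)\<^sup>2)"
    using assms(2) by (simp add: R_G_def)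
  have w_nonneg: "w n \<ge> 0" for n
    by (simp add: w_def)
  have sums_w: "w sums M 0 t" "(\<lambda>n. w n * real n) sums M 1 t" "(\<lambda>n. w n * (real n)\<^sup>2) sums M 2 t"
    using exp_moment_sums[OF R, of 0] exp_moment_sums[OF R, of 1] exp_moment_sums[OF R, of 2]
    unfolding M_def w_def by (simp_all add: mult_ac)
  have "M 0 t > 0"
    unfolding M_def using assms(1) R by (intro exp_moment_pos) auto
  with sums_w H_fun_Complex_sums[OF assms(2), of \<theta>, folded w_def Hz_def Hz'_def] show ?thesis
    by (intro weighted_covariance_bound_sums[where w = w and x = real and y = "\<lambda>n. cis \<theta> ^ n"])
      (simp_all add: w_nonneg norm_power)
qed

theorem corollary5p3:
  fixes a :: "nat \<Rightarrow> real" and t \<theta> :: real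
  assumes nonneg: "\<And>n. a n \<ge> 0"
    and inf_nz: "infinite {n. a n \<noteq> 0}"
    and t_lt: "ereal (exp t) < R_G a"
    and theta: "\<theta> \<in> {-pi..pi}"
    and denom: "(Re (H_fun a (complex_of_real t)))\<^sup>2 *
        ((Re (H_fun a (complex_of_real t)))\<^sup>2 - (cmod (H_fun a (Complex t \<theta>)))\<^sup>2) \<noteq> 0"
  shows "(cmod (H_fun a (complex_of_real t) * deriv (H_fun a) (Complex t \<theta>)
              - H_fun a (Complex t \<theta>) * deriv (H_fun a) (complex_of_real t)))\<^sup>2
         / ((Re (H_fun a (complex_of_real t)))\<^sup>2 *
            ((Re (H_fun a (complex_of_real t)))\<^sup>2 - (cmod (H_fun a (Complex t \<theta>)))\<^sup>2))
         \<le> B_fun a t"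
proof -
  define M where "M = exp_moment (\<lambda>n. (a n)\<^sup>2)"
  define Hz where "Hz = H_fun a (Complex t \<theta>)"
  define Hz' where "Hz' = deriv (H_fun a) (Complex t \<theta>)"
  \<comment> \<open>Only one nonzero coefficient is used.\<close>
  obtain m where m: "a m \<noteq> 0"
    using inf_nz not_finite_existsD by auto
  have H_t: "H_fun a (of_real t) = of_real (M 0 t)"
    and H'_t: "deriv (H_fun a) (of_real t) = of_real (M 1 t)"
    using H_fun_of_real[OF t_lt] deriv_H_fun_of_real[OF t_lt] by (simp_all add: M_def)
  have "(cmod Hz)\<^sup>2 \<le> (M 0 t)\<^sup>2"
    using norm_H_fun_Complex_le[OF t_lt, of \<theta>] by (simp add: power_mono M_def Hz_def)
  then have D_pos: "(M 0 t)\<^sup>2 - (cmod Hz)\<^sup>2 > 0"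
    using denom unfolding H_t Hz_def[symmetric] by simp
  have "(cmod (of_real (M 0 t) * Hz' - Hz * of_real (M 1 t)))\<^sup>2 / ((M 0 t)\<^sup>2 * ((M 0 t)\<^sup>2 - (cmod Hz)\<^sup>2))
      \<le> (M 0 t * M 2 t - (M 1 t)\<^sup>2) * ((M 0 t)\<^sup>2 - (cmod Hz)\<^sup>2)
          / ((M 0 t)\<^sup>2 * ((M 0 t)\<^sup>2 - (cmod Hz)\<^sup>2))"
    using H_fun_covariance_bound[OF m t_lt, of \<theta>] D_pos
    by (intro divide_right_mono) (simp_all add: M_def Hz_def Hz'_def power2_eq_square)
  also have "\<dots> = (M 0 t * M 2 t - (M 1 t)\<^sup>2) / (M 0 t)\<^sup>2"
    using D_pos by simp
  also have "\<dots> = B_fun a t"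
    using B_fun_eq_exp_moments[OF m t_lt] by (simp add: M_def mult.commute)
  finally show ?thesis
    unfolding H_t H'_t Hz_def[symmetric] Hz'_def[symmetric] by simp
qed

end
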